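(* Let $A^1,A^2,A^3$ be three disjoint cubic graphs with $v(A^i)\equiv 0\pmod 6$ for each $i$, let $a^i\in V(A^i)$ with $N(a^i,A^i)=\{a^i_1,a^i_2,a^i_3\}$, and let $G=Y(A^1,a^1;A^2,a^2;A^3,a^3)$. Let $P$ be a $\Lambda$-factor of $G$. For $i\in\{1,2,3\}$ let $D^i$ be the set of edges of $G$ with exactly one end in $V(A^i-a^i)$ (i.e. $D^i=\{a^i_jz_j: j\in\{1,2,3\}\}$), and let $P^i$ be the union of the components of $P$ that contain an edge of $D^i$. Then the number of components of $P^i$ is $1$ or $2$, for every $i\in\{1,2,3\}$.
   Context: Graphs are finite, undirected, without loops or multiple edges; $v(G)=|V(G)|$; $N(x,G)$ is the set of neighbours of $x$. The graph $Y(A^1,a^1;A^2,a^2;A^3,a^3)$ is obtained from $(A^1-a^1)\cup(A^2-a^2)\cup(A^3-a^3)$ by adding three new vertices $z_1,z_2,z_3$ and the nine new edges $z_ja^i_j$, $i,j\in\{1,2,3\}$. A $\Lambda$-factor of $G$ is a spanning subgraph each of whose components is a path on 3 vertices. *)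

theory Defs
  imports Main
begin

definition graph :: "'a set \<Rightarrow> 'a set set \<Rightarrow> bool" where
  "graph V E \<longleftrightarrow> finite V \<and> (\<forall>e\<in>E. \<exists>u v. u \<noteq> v \<and> u \<in> V \<and> v \<in> V \<and> e = {u, v})"

definition nbrs :: "'a set set \<Rightarrow> 'a \<Rightarrow> 'a set" where
  "nbrs E x = {y. {x, y} \<in> E}"

definition cubic :: "'a set \<Rightarrow> 'a set set \<Rightarrow> bool" where
  "cubic V E \<longleftrightarrow> graph V E \<and> (\<forall>x\<in>V. card (nbrs E x) = 3)"

definition del_verts :: "'a set \<Rightarrow> 'a \<Rightarrow> 'a set" where
  "del_verts V a = V - {a}"

definition del_edges :: "'a set set \<Rightarrow> 'a \<Rightarrow> 'a set set" where
  "del_edges E a = {e \<in> E. a \<notin> e}"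

text \<open>The graph Y(A1,a1;A2,a2;A3,a3): graphs indexed by i in {1,2,3}, nb i j is the
  j-th neighbour of a i in A i, z j are the three new vertices.\<close>
definition Y_verts :: "(nat \<Rightarrow> 'a set) \<Rightarrow> (nat \<Rightarrow> 'a) \<Rightarrow> (nat \<Rightarrow> 'a) \<Rightarrow> 'a set" where
  "Y_verts V a z = (\<Union>i\<in>{1,2,3}. del_verts (V i) (a i)) \<union> {z 1, z 2, z 3}"

definition Y_edges :: "(nat \<Rightarrow> 'a set set) \<Rightarrow> (nat \<Rightarrow> 'a) \<Rightarrow> (nat \<Rightarrow> nat \<Rightarrow> 'a)
    \<Rightarrow> (nat \<Rightarrow> 'a) \<Rightarrow> 'a set set" where
  "Y_edges E a nb z = (\<Union>i\<in>{1,2,3}. del_edges (E i) (a i))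
      \<union> {{z j, nb i j} | i j. i \<in> {1,2,3} \<and> j \<in> {1,2,3}}"

definition adj :: "'a set set \<Rightarrow> ('a \<times> 'a) set" where
  "adj F = {(u, v). {u, v} \<in> F}"

definition comp :: "'a set \<Rightarrow> 'a set set \<Rightarrow> 'a \<Rightarrow> 'a set" where
  "comp V F x = {y \<in> V. (x, y) \<in> (adj F)\<^sup>*}"

definition components :: "'a set \<Rightarrow> 'a set set \<Rightarrow> 'a set set" where
  "components V F = comp V F ` V"

text \<open>A Lambda-factor of (V,E): a spanning subgraph (V,F), F a subset of E, each of whose
  components is a path on 3 vertices (a connected graph with 3 vertices and 2 edges).\<close>
definition Lambda_factor :: "'a set \<Rightarrow> 'a set set \<Rightarrow> 'a set set \<Rightarrow> bool" where
  "Lambda_factor V E F \<longleftrightarrow> F \<subseteq> E \<and>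
     (\<forall>C \<in> components V F. card C = 3 \<and> card {e \<in> F. e \<subseteq> C} = 2)"

end

theory Submission
  imports Defs
begin

text \<open>Let the hub be the union of the (at most three) paths of the factor through
  \<open>z\<^sub>1, z\<^sub>2, z\<^sub>3\<close>; it has at most nine vertices. A side \<open>A\<^sup>i - a\<^sup>i\<close> can only be
  left through an edge to some \<open>z\<^sub>j\<close>, so the paths meeting a side outside the hub lie
  inside it, and since the side has \<open>v(A\<^sup>i) - 1 \<equiv> 2 (mod 3)\<close> vertices, the hub
  meets every side in \<open>2 (mod 3)\<close> vertices. Hence some path leaves side \<open>i\<close>,
  and every such path lies in the hub, so there are one to three of them. If there
  were three, they would be the three hub paths, each containing a different neighbour
  of \<open>a\<^sup>i\<close>; then the hub meets side \<open>i\<close> in at least five vertices and the other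
  sides in at least two each, so it has at least \<open>3 + 5 + 2 + 2 > 9\<close> vertices.\<close>

lemma sym_adj: "sym (adj F)"
  unfolding adj_def sym_def by (auto simp: insert_commute)

lemma adj_rtrancl_sym: "(x, y) \<in> (adj F)\<^sup>* \<Longrightarrow> (y, x) \<in> (adj F)\<^sup>*"
  by (rule symD[OF sym_rtrancl[OF sym_adj]])

lemma comp_subset: "comp V F x \<subseteq> V"
  unfolding comp_def by blast

lemma in_comp_self: "x \<in> V \<Longrightarrow> x \<in> comp V F x"
  unfolding comp_def by simp

lemma comp_eq: "y \<in> comp V F x \<Longrightarrow> comp V F y = comp V F x"
  unfolding comp_def by (auto dest: adj_rtrancl_sym intro: rtrancl_trans)

lemma Union_comp_eq:
  assumes "X \<subseteq> V" "\<And>x. x \<in> X \<Longrightarrow> comp V F x \<subseteq> X"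
  shows "\<Union> (comp V F ` X) = X"
proof
  show "\<Union> (comp V F ` X) \<subseteq> X"
    using assms(2) by (rule UN_least)
  show "X \<subseteq> \<Union> (comp V F ` X)"
  proof
    fix x
    assume x: "x \<in> X"
    then have "x \<in> comp V F x"
      using assms(1) by (intro in_comp_self) blast
    with x show "x \<in> \<Union> (comp V F ` X)"
      by blast
  qed
qed

lemma pairwise_disjnt_comp: "pairwise disjnt (comp V F ` X)"
proof (rule pairwiseI)
  fix A B
  assume "A \<in> comp V F ` X" "B \<in> comp V F ` X" "A \<noteq> B"
  then obtain x y where xy: "A = comp V F x" "B = comp V F y" "A \<noteq> B"
    by blast
  show "disjnt A B"
    unfolding disjnt_iff
  proof (intro allI notI)
    fix w
    assume "w \<in> A \<and> w \<in> B"
    then have "comp V F w = A" "comp V F w = B"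
      using xy comp_eq[of w V F x] comp_eq[of w V F y] by simp_all
    with xy(3) show False
      by simp
  qed
qed

lemma dvd_card_union_of_components:
  assumes "finite V" "X \<subseteq> V" "\<And>x. x \<in> X \<Longrightarrow> comp V F x \<subseteq> X"
    and "\<And>C. C \<in> components V F \<Longrightarrow> card C = n"
  shows "n dvd card X"
proof -
  have "finite C" if "C \<in> comp V F ` X" for C
    using that finite_subset[OF comp_subset assms(1)] by auto
  with pairwise_disjnt_comp
  have "card (\<Union> (comp V F ` X)) = (\<Sum>C \<in> comp V F ` X. card C)"
    by (rule card_Union_disjoint)
  also have "\<dots> = (\<Sum>C \<in> comp V F ` X. n)"
  proof (rule sum.cong)
    fix C
    assume "C \<in> comp V F ` X"
    then have "C \<in> components V F"
      using assms(2) unfolding components_def by blast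
    then show "card C = n"
      by (rule assms(4))
  qed simp
  finally show ?thesis
    using Union_comp_eq[OF assms(2,3)] by simp
qed

lemma Lambda_factor_card_comp:
  assumes "Lambda_factor V E F" "x \<in> V"
  shows "card (comp V F x) = 3"
proof -
  have "comp V F x \<in> components V F"
    unfolding components_def using assms(2) by (rule imageI)
  with assms(1) show ?thesis
    unfolding Lambda_factor_def by blast
qed

lemma pred_mod_3_if_mod_6:
  assumes "0 < (n::nat)" "n mod 6 = 0"
  shows "(n - 1) mod 3 = 2"
proof -
  obtain m where m: "n = 6 * m"
    using assms(2) by blast
  with assms(1) have "n - 1 = 3 * (2 * m - 1) + 2"
    by simp
  moreover have "(3 * k + 2) mod 3 = (2::nat)" for k
    by presburger
  ultimately show ?thesis
    by metis
qed

locale Y_graph =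
  fixes V :: "nat \<Rightarrow> 'a set" and E :: "nat \<Rightarrow> 'a set set"
    and a :: "nat \<Rightarrow> 'a" and nb :: "nat \<Rightarrow> nat \<Rightarrow> 'a" and z :: "nat \<Rightarrow> 'a"
  assumes cubic_V: "i \<in> {1,2,3} \<Longrightarrow> cubic (V i) (E i)"
    and disjoint_V: "i \<in> {1,2,3} \<Longrightarrow> k \<in> {1,2,3} \<Longrightarrow> i \<noteq> k \<Longrightarrow> V i \<inter> V k = {}"
    and a_in_V: "i \<in> {1,2,3} \<Longrightarrow> a i \<in> V i"
    and nbrs_a: "i \<in> {1,2,3} \<Longrightarrow> nbrs (E i) (a i) = {nb i 1, nb i 2, nb i 3}"
    and z_distinct: "z 1 \<noteq> z 2" "z 1 \<noteq> z 3" "z 2 \<noteq> z 3"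
    and z_notin_V: "i \<in> {1,2,3} \<Longrightarrow> j \<in> {1,2,3} \<Longrightarrow> z j \<notin> V i"
begin

abbreviation side :: "nat \<Rightarrow> 'a set" where
  "side i \<equiv> del_verts (V i) (a i)"

abbreviation W :: "'a set" where
  "W \<equiv> Y_verts V a z"

lemma edge_of_V:
  assumes "i \<in> {1,2,3}" "e \<in> E i"
  obtains u v where "u \<noteq> v" "u \<in> V i" "v \<in> V i" "e = {u, v}"
  using cubic_V[OF assms(1)] assms(2) unfolding cubic_def graph_def by blast

lemma finite_V: "i \<in> {1,2,3} \<Longrightarrow> finite (V i)"
  using cubic_V unfolding cubic_def graph_def by blast

lemma card_side: "i \<in> {1,2,3} \<Longrightarrow> card (side i) = card (V i) - 1"
  unfolding del_verts_def using a_in_V finite_V by simp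

lemma nb_in_side:
  assumes "i \<in> {1,2,3}" "j \<in> {1,2,3}"
  shows "nb i j \<in> side i"
proof -
  have "{a i, nb i j} \<in> E i"
    using nbrs_a[OF assms(1)] assms(2) unfolding nbrs_def by auto
  then obtain u v where "u \<noteq> v" "u \<in> V i" "v \<in> V i" "{a i, nb i j} = {u, v}"
    using edge_of_V[OF assms(1)] by metis
  then show ?thesis unfolding del_verts_def by (auto simp: doubleton_eq_iff)
qed

lemma card_nb: "i \<in> {1,2,3} \<Longrightarrow> card {nb i 1, nb i 2, nb i 3} = 3"
  using cubic_V a_in_V nbrs_a unfolding cubic_def by metis

lemma sides_disjoint:
  "i \<in> {1,2,3} \<Longrightarrow> k \<in> {1,2,3} \<Longrightarrow> i \<noteq> k \<Longrightarrow> side i \<inter> side k = {}"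
  using disjoint_V unfolding del_verts_def by blast

lemma z_notin_side: "i \<in> {1,2,3} \<Longrightarrow> j \<in> {1,2,3} \<Longrightarrow> z j \<notin> side i"
  using z_notin_V unfolding del_verts_def by blast

lemma z_in_W: "j \<in> {1,2,3} \<Longrightarrow> z j \<in> W"
  unfolding Y_verts_def by auto

lemma side_subset_W: "i \<in> {1,2,3} \<Longrightarrow> side i \<subseteq> W"
  unfolding Y_verts_def by auto

lemma finite_W: "finite W"
  unfolding Y_verts_def del_verts_def using finite_V by auto

lemma Y_edgeE:
  assumes "e \<in> Y_edges E a nb z"
  obtains (inner) i u v where "i \<in> {1,2,3}" "u \<noteq> v" "u \<in> side i" "v \<in> side i" "e = {u, v}"
    | (spoke) i j where "i \<in> {1,2,3}" "j \<in> {1,2,3}" "e = {z j, nb i j}"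
proof -
  from assms consider (inner) i where "i \<in> {1,2,3}" "e \<in> E i" "a i \<notin> e"
    | (spoke) i j where "i \<in> {1,2,3}" "j \<in> {1,2,3}" "e = {z j, nb i j}"
    unfolding Y_edges_def del_edges_def by blast
  then show ?thesis
  proof cases
    case inner
    then obtain u v where "u \<noteq> v" "u \<in> V i" "v \<in> V i" "e = {u, v}"
      by (meson edge_of_V)
    with inner show ?thesis using that(1) unfolding del_verts_def by blast
  next
    case spoke
    then show ?thesis using that(2) by blast
  qed
qed

lemma Y_edge_from_side:
  assumes "i \<in> {1,2,3}" "y \<in> side i" "{y, w} \<in> Y_edges E a nb z"
  shows "w \<in> side i \<or> (\<exists>j\<in>{1,2,3}. y = nb i j \<and> w = z j)"
  using assms(3)
proof (cases rule: Y_edgeE)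
  case (inner k u v)
  then have "y \<in> side k" "w \<in> side k"
    by (auto simp: doubleton_eq_iff)
  moreover have "k = i"
    using \<open>y \<in> side k\<close> assms(1,2) inner(1) sides_disjoint[of i k] by blast
  ultimately show ?thesis
    by simp
next
  case (spoke k j)
  have "y \<noteq> z j"
    using z_notin_side[OF assms(1) spoke(2)] assms(2) by blast
  then have y: "y = nb k j" and w: "w = z j"
    using spoke(3) by (auto simp: doubleton_eq_iff)
  have "k = i"
    using nb_in_side[OF spoke(1,2)] assms(1,2) spoke(1) sides_disjoint[of i k] y by blast
  with y w spoke(2) show ?thesis
    by blast
qed

lemma Y_edge_crossing:
  assumes "e \<in> Y_edges E a nb z" "card (e \<inter> side i) = 1" "i \<in> {1,2,3}"
  shows "\<exists>j\<in>{1,2,3}. e = {z j, nb i j}"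
  using assms(1)
proof (cases rule: Y_edgeE)
  case (inner k u v)
  have "e \<inter> side i = (if k = i then {u, v} else {})"
    using inner sides_disjoint[OF assms(3) inner(1)] by auto
  with assms(2) inner(2) show ?thesis
    by (auto split: if_splits)
next
  case (spoke k j)
  have "k = i"
  proof (rule ccontr)
    assume "k \<noteq> i"
    then have "e \<inter> side i = {}"
      using spoke nb_in_side sides_disjoint[OF assms(3)] z_notin_side[OF assms(3)] by blast
    with assms(2) show False
      by simp
  qed
  with spoke show ?thesis
    by blast
qed

lemma walk_from_side:
  assumes "F \<subseteq> Y_edges E a nb z" "i \<in> {1,2,3}" "x \<in> side i" "(x, w) \<in> (adj F)\<^sup>*"
  shows "w \<in> side i \<or> (\<exists>j\<in>{1,2,3}. {z j, nb i j} \<in> F \<and> (x, z j) \<in> (adj F)\<^sup>*)"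
  using assms(4)
proof (induction rule: rtrancl_induct)
  case base
  with assms(3) show ?case
    by simp
next
  case (step y w)
  have yw: "{y, w} \<in> F"
    using step.hyps(2) by (simp add: adj_def)
  from step.IH show ?case
  proof
    assume "y \<in> side i"
    with yw assms(1,2) have "w \<in> side i \<or> (\<exists>j\<in>{1,2,3}. y = nb i j \<and> w = z j)"
      using Y_edge_from_side by blast
    with yw step.hyps show ?case
      by (auto simp: insert_commute intro: rtrancl_into_rtrancl)
  qed blast
qed

end

locale Y_Lambda_factor = Y_graph +
  fixes F :: "'a set set"
  assumes Lambda_factor_F: "Lambda_factor W (Y_edges E a nb z) F"
begin

definition hub :: "'a set" where
  "hub = comp W F (z 1) \<union> comp W F (z 2) \<union> comp W F (z 3)"

definition crossing :: "nat \<Rightarrow> 'a set set" where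
  "crossing i = {C \<in> components W F. \<exists>e \<in> F. e \<subseteq> C \<and>
     e \<in> {d \<in> Y_edges E a nb z. card (d \<inter> side i) = 1}}"

lemma F_subset: "F \<subseteq> Y_edges E a nb z"
  using Lambda_factor_F unfolding Lambda_factor_def by blast

lemma card_comp: "x \<in> W \<Longrightarrow> card (comp W F x) = 3"
  using Lambda_factor_F by (rule Lambda_factor_card_comp)

lemma finite_hub: "finite hub"
  unfolding hub_def using finite_subset[OF comp_subset finite_W] by blast

lemma z_in_hub: "j \<in> {1,2,3} \<Longrightarrow> z j \<in> hub"
  unfolding hub_def using in_comp_self[OF z_in_W] by blast

lemma card_hub_le: "card hub \<le> 9"
proof -
  have "card hub \<le> card (comp W F (z 1)) + card (comp W F (z 2)) + card (comp W F (z 3))"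
    unfolding hub_def by (meson add_right_mono card_Un_le le_trans)
  also have "\<dots> = 9"
    using card_comp z_in_W by simp
  finally show ?thesis .
qed

lemma card_hub_ge:
  "3 + card (side 1 \<inter> hub) + card (side 2 \<inter> hub) + card (side 3 \<inter> hub) \<le> card hub"
proof -
  let ?S = "\<lambda>k. side k \<inter> hub"
  have fin: "finite (?S k)" for k
    using finite_hub by simp
  have "{z 1, z 2, z 3} \<inter> ?S 1 = {}" "({z 1, z 2, z 3} \<union> ?S 1) \<inter> ?S 2 = {}"
    "({z 1, z 2, z 3} \<union> ?S 1 \<union> ?S 2) \<inter> ?S 3 = {}"
    using z_notin_side sides_disjoint[of 1 2] sides_disjoint[of 1 3] sides_disjoint[of 2 3]
    by auto
  then have "card ({z 1, z 2, z 3} \<union> ?S 1 \<union> ?S 2 \<union> ?S 3)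
      = 3 + card (?S 1) + card (?S 2) + card (?S 3)"
    using z_distinct fin by (simp add: card_Un_disjoint)
  moreover have "card ({z 1, z 2, z 3} \<union> ?S 1 \<union> ?S 2 \<union> ?S 3) \<le> card hub"
    by (rule card_mono[OF finite_hub]) (use z_in_hub in auto)
  ultimately show ?thesis
    by linarith
qed

lemma comp_Int_hub:
  assumes "x \<in> W" "x \<notin> hub"
  shows "comp W F x \<inter> hub = {}"
proof (rule ccontr)
  assume "comp W F x \<inter> hub \<noteq> {}"
  then obtain w j where "j \<in> {1,2,3}" "w \<in> comp W F x" "w \<in> comp W F (z j)"
    unfolding hub_def by blast
  then have "x \<in> comp W F (z j)"
    using comp_eq in_comp_self[OF assms(1)] by metis
  with \<open>j \<in> {1,2,3}\<close> assms(2) show False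
    unfolding hub_def by blast
qed

lemma comp_outside_hub:
  assumes "i \<in> {1,2,3}" "x \<in> side i - hub"
  shows "comp W F x \<subseteq> side i - hub"
proof
  fix w
  assume w: "w \<in> comp W F x"
  have xW: "x \<in> W"
    using assms side_subset_W by blast
  have "(x, w) \<in> (adj F)\<^sup>*"
    using w unfolding comp_def by blast
  moreover have "(x, z j) \<notin> (adj F)\<^sup>*" if "j \<in> {1,2,3}" for j
    using comp_Int_hub[OF xW] assms(2) z_in_hub[OF that] z_in_W[OF that]
    unfolding comp_def by blast
  ultimately have "w \<in> side i"
    using walk_from_side[OF F_subset assms(1)] assms(2) by blast
  moreover have "w \<notin> hub"
    using comp_Int_hub[OF xW] assms(2) w by blast
  ultimately show "w \<in> side i - hub"
    by blast
qed

lemma card_side_Int_hub_mod: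
  assumes "i \<in> {1,2,3}"
  shows "card (side i \<inter> hub) mod 3 = card (side i) mod 3"
proof -
  txt \<open>The vertices of a side outside the hub are covered by whole paths of the factor.\<close>
  have "3 dvd card (side i - hub)"
    using finite_W _ comp_outside_hub[OF assms]
  proof (rule dvd_card_union_of_components)
    show "side i - hub \<subseteq> W"
      using side_subset_W[OF assms] by blast
  qed (auto simp: components_def card_comp)
  moreover have "card (side i) = card (side i \<inter> hub) + card (side i - hub)"
    using card_Int_Diff finite_subset[OF side_subset_W[OF assms] finite_W] by blast
  ultimately show ?thesis
    by (auto elim!: dvdE)
qed

lemma crossing_memE:
  assumes "C \<in> crossing i" "i \<in> {1,2,3}"
  obtains j where "j \<in> {1,2,3}" "C = comp W F (z j)" "nb i j \<in> C"
proof -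
  obtain x e where x: "x \<in> W" "C = comp W F x" and e: "e \<subseteq> C" "e \<in> Y_edges E a nb z"
      "card (e \<inter> side i) = 1"
    using assms(1) unfolding crossing_def components_def by blast
  obtain j where j: "j \<in> {1,2,3}" "e = {z j, nb i j}"
    using Y_edge_crossing[OF e(2,3) assms(2)] by blast
  then have "z j \<in> comp W F x"
    using e(1) x(2) by blast
  then have "C = comp W F (z j)"
    unfolding x(2) by (rule comp_eq[symmetric])
  with j e(1) show ?thesis
    by (intro that) auto
qed

lemma crossing_subset:
  assumes "i \<in> {1,2,3}"
  shows "crossing i \<subseteq> (\<lambda>j. comp W F (z j)) ` {1,2,3}"
proof
  fix C
  assume "C \<in> crossing i"
  then obtain j where "j \<in> {1,2,3}" "C = comp W F (z j)"
    using assms by (rule crossing_memE)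
  then show "C \<in> (\<lambda>j. comp W F (z j)) ` {1,2,3}"
    by blast
qed

lemma card_crossing_le:
  assumes "i \<in> {1,2,3}"
  shows "card (crossing i) \<le> 3"
proof -
  have "card (crossing i) \<le> card ((\<lambda>j. comp W F (z j)) ` {1,2,3})"
    by (rule card_mono[OF _ crossing_subset[OF assms]]) simp
  also have "\<dots> \<le> card {1,2,3::nat}"
    by (rule card_image_le) simp
  finally show ?thesis
    by simp
qed

lemma crossing_nonempty:
  assumes "i \<in> {1,2,3}" "side i \<inter> hub \<noteq> {}"
  shows "crossing i \<noteq> {}"
proof -
  obtain y j where y: "y \<in> side i" "j \<in> {1,2,3}" "y \<in> comp W F (z j)"
    using assms(2) unfolding hub_def by blast
  then have "(y, z j) \<in> (adj F)\<^sup>*"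
    unfolding comp_def by (blast intro: adj_rtrancl_sym)
  then obtain k where k: "k \<in> {1,2,3}" "{z k, nb i k} \<in> F" "(y, z k) \<in> (adj F)\<^sup>*"
    using walk_from_side[OF F_subset assms(1) y(1)] z_notin_side[OF assms(1) y(2)] by blast
  have "(z k, nb i k) \<in> adj F"
    using k(2) unfolding adj_def by simp
  then have "{z k, nb i k} \<subseteq> comp W F y"
    using k(1,3) z_in_W nb_in_side[OF assms(1)] side_subset_W[OF assms(1)]
    unfolding comp_def by (blast intro: rtrancl_into_rtrancl)
  moreover have "card ({z k, nb i k} \<inter> side i) = 1"
  proof -
    have "{z k, nb i k} \<inter> side i = {nb i k}"
      using nb_in_side[OF assms(1) k(1)] z_notin_side[OF assms(1) k(1)] by blast
    then show ?thesis
      by simp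
  qed
  moreover have "comp W F y \<in> components W F"
    using y(1) side_subset_W[OF assms(1)] unfolding components_def by blast
  ultimately have "comp W F y \<in> crossing i"
    using k(2) F_subset unfolding crossing_def by blast
  then show ?thesis
    by blast
qed

lemma nb_in_hub_if_card_crossing_3:
  assumes "i \<in> {1,2,3}" "card (crossing i) = 3"
  shows "{nb i 1, nb i 2, nb i 3} \<subseteq> hub"
proof -
  let ?Z = "(\<lambda>j. comp W F (z j)) ` {1,2,3}"
  have three: "card {1,2,3::nat} = 3"
    by simp
  have le: "card ?Z \<le> card {1,2,3::nat}"
    by (rule card_image_le) simp
  then have "card ?Z \<le> card (crossing i)"
    using assms(2) three by linarith
  then have Z: "crossing i = ?Z"
    using card_seteq[OF _ crossing_subset[OF assms(1)]] by blast
  then have "card ?Z = card {1,2,3::nat}"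
    using assms(2) three by simp
  then have inj: "inj_on (\<lambda>j. comp W F (z j)) {1,2,3}"
    by (intro eq_card_imp_inj_on[rotated]) simp_all
  have "nb i j \<in> comp W F (z j)" if "j \<in> {1,2,3}" for j
  proof -
    have "comp W F (z j) \<in> crossing i"
      using Z(1) that by blast
    then obtain k where "k \<in> {1,2,3}" "comp W F (z j) = comp W F (z k)" "nb i k \<in> comp W F (z j)"
      using assms(1) by (elim crossing_memE) auto
    with inj that show ?thesis
      by (metis inj_onD)
  qed
  then show ?thesis
    unfolding hub_def by blast
qed

theorem card_crossing:
  assumes "\<And>k. k \<in> {1,2,3} \<Longrightarrow> card (side k) mod 3 = 2" "i \<in> {1,2,3}"
  shows "card (crossing i) \<in> {1, 2}"
proof -
  have hub_mod: "card (side k \<inter> hub) mod 3 = 2" if "k \<in> {1,2,3}" for k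
    using card_side_Int_hub_mod assms(1) that by simp
  have "crossing i \<noteq> {}"
    using crossing_nonempty[OF assms(2)] hub_mod[OF assms(2)] by fastforce
  moreover have "card (crossing i) \<noteq> 3"
  proof
    assume "card (crossing i) = 3"
    then have "card {nb i 1, nb i 2, nb i 3} \<le> card (side i \<inter> hub)"
      using nb_in_hub_if_card_crossing_3[OF assms(2)] nb_in_side[OF assms(2)]
      by (intro card_mono) (auto simp: finite_hub)
    then have "5 \<le> card (side i \<inter> hub)"
      using card_nb[OF assms(2)] hub_mod[OF assms(2)] by presburger
    moreover have "2 \<le> card (side k \<inter> hub)" if "k \<in> {1,2,3}" for k
      using hub_mod[OF that] by presburger
    ultimately show False
      using card_hub_ge card_hub_le assms(2) by fastforce
  qed
  moreover have "finite (crossing i)"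
    using finite_subset[OF crossing_subset[OF assms(2)]] by blast
  ultimately show ?thesis
    using card_crossing_le[OF assms(2)] card_gt_0_iff[of "crossing i"] by auto
qed

end

theorem mainTheorem7:
  fixes V :: "nat \<Rightarrow> 'a set" and E :: "nat \<Rightarrow> 'a set set"
    and a :: "nat \<Rightarrow> 'a" and nb :: "nat \<Rightarrow> nat \<Rightarrow> 'a" and z :: "nat \<Rightarrow> 'a"
    and F :: "'a set set"
  assumes cub: "\<forall>i\<in>{1,2,3}. cubic (V i) (E i)"
    and disj: "\<forall>i\<in>{1,2,3}. \<forall>j\<in>{1,2,3}. i \<noteq> j \<longrightarrow> V i \<inter> V j = {}"
    and six: "\<forall>i\<in>{1,2,3}. card (V i) mod 6 = 0"
    and a_in: "\<forall>i\<in>{1,2,3}. a i \<in> V i"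
    and nbr: "\<forall>i\<in>{1,2,3}. nbrs (E i) (a i) = {nb i 1, nb i 2, nb i 3}"
    and z_dist: "z 1 \<noteq> z 2" "z 1 \<noteq> z 3" "z 2 \<noteq> z 3"
    and z_new: "\<forall>i\<in>{1,2,3}. \<forall>j\<in>{1,2,3}. z j \<notin> V i"
    and P: "Lambda_factor (Y_verts V a z) (Y_edges E a nb z) F"
  shows "\<forall>i\<in>{1,2,3}.
     card {C \<in> components (Y_verts V a z) F.
             \<exists>e \<in> F. e \<subseteq> C \<and>
               e \<in> {d \<in> Y_edges E a nb z. card (d \<inter> del_verts (V i) (a i)) = 1}}
     \<in> {1, 2}"
proof -
  interpret Y_Lambda_factor V E a nb z F
    by (unfold_locales; (rule z_dist)?; simp add: cub disj a_in nbr z_new P)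
  have side_mod: "card (side k) mod 3 = 2" if "k \<in> {1,2,3}" for k
  proof -
    have "0 < card (V k)"
      using a_in_V[OF that] finite_V[OF that] by (auto simp: card_gt_0_iff)
    moreover have "card (V k) mod 6 = 0"
      using six that by (rule bspec)
    ultimately show ?thesis
      unfolding card_side[OF that] by (rule pred_mod_3_if_mod_6)
  qed
  show ?thesis
    unfolding crossing_def[symmetric]
  proof
    fix i :: nat
    assume "i \<in> {1,2,3}"
    with side_mod show "card (crossing i) \<in> {1, 2}"
      by (rule card_crossing)
  qed
qed

end
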